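(* Let $(G,+)$ be a group and let $(G,+,* )$ and $(G,+,\odot)$ be interchange near rings with underlying group $(G,+)$. Define $\varepsilon_*(x)=x*0$, $\eta_*(x)=0*x$, $\varepsilon_\odot(x)=x\odot 0$, $\eta_\odot(x)=0\odot x$. Then $(G,+,* )\cong(G,+,\odot)$ (as interchange near rings) if and only if the pairs $(\varepsilon_*,\eta_* )$ and $(\varepsilon_\odot,\eta_\odot)$ are similar, i.e. there exists $\alpha\in\mathrm{Aut}(G,+)$ with $\alpha^{-1}\varepsilon_*\alpha = \varepsilon_\odot$ and $\alpha^{-1}\eta_*\alpha = \eta_\odot$.
   Context: An interchange near ring is a triple $(G,+,\bullet)$ where $(G,+)$ is a group (written additively, not necessarily abelian, identity $0$) and $\bullet$ is a binary operation on $G$ satisfying the interchange law $(w+x)\bullet(y+z) = (w\bullet y)+(x\bullet z)$ for all $w,x,y,z\in G$. An isomorphism of interchange near rings $(G_1,+_1,\bullet_1)\to(G_2,+_2,\bullet_2)$ is a bijective group homomorphism $\varphi$ with $\varphi(x\bullet_1 y)=\varphi(x)\bullet_2\varphi(y)$ for all $x,y$. Composition of maps is written $\alpha\beta = \alpha\circ\beta$. *)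

theory Defs
  imports Main
begin

text \<open>The group (G,+) is modelled as the whole carrier of a type of class group_add
  (written additively, not necessarily abelian).\<close>

definition interchange_near_ring :: "('a::group_add \<Rightarrow> 'a \<Rightarrow> 'a) \<Rightarrow> bool" where
  "interchange_near_ring m \<longleftrightarrow> (\<forall>w x y z. m (w + x) (y + z) = m w y + m x z)"

definition group_hom :: "('a::group_add \<Rightarrow> 'b::group_add) \<Rightarrow> bool" where
  "group_hom f \<longleftrightarrow> (\<forall>x y. f (x + y) = f x + f y)"

definition group_aut :: "('a::group_add \<Rightarrow> 'a) \<Rightarrow> bool" where
  "group_aut f \<longleftrightarrow> bij f \<and> group_hom f"

definition inr_iso :: "('a::group_add \<Rightarrow> 'a \<Rightarrow> 'a) \<Rightarrow> ('b::group_add \<Rightarrow> 'b \<Rightarrow> 'b) \<Rightarrow> ('a \<Rightarrow> 'b) \<Rightarrow> bool" where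
  "inr_iso m1 m2 \<phi> \<longleftrightarrow> bij \<phi> \<and> group_hom \<phi> \<and> (\<forall>x y. \<phi> (m1 x y) = m2 (\<phi> x) (\<phi> y))"

definition inr_isomorphic :: "('a::group_add \<Rightarrow> 'a \<Rightarrow> 'a) \<Rightarrow> ('b::group_add \<Rightarrow> 'b \<Rightarrow> 'b) \<Rightarrow> bool" where
  "inr_isomorphic m1 m2 \<longleftrightarrow> (\<exists>\<phi>. inr_iso m1 m2 \<phi>)"

end

theory Submission
  imports Defs
begin

(* The interchange law with the zero element inserted gives the
   decomposition  x * y = (x * 0) + (0 * y),  so an interchange near ring is
   determined by its two "halves"  eps(x) = x * 0  and  eta(y) = 0 * y.
   Consequently a group automorphism phi is an isomorphism of interchange near
   rings exactly when it intertwines the halves:  phi o eps_* = eps_odot o phi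
   and  phi o eta_* = eta_odot o phi.  Finally, for an automorphism alpha,
   the conjugation identity  inv alpha o f o alpha = g  says precisely that
   inv alpha intertwines f with g.  Since alpha and inv alpha are automorphisms
   together, the two existence statements of the theorem coincide. *)

definition intertwines :: "('a \<Rightarrow> 'b) \<Rightarrow> ('a \<Rightarrow> 'a) \<Rightarrow> ('b \<Rightarrow> 'b) \<Rightarrow> bool" where
  "intertwines \<phi> f g \<longleftrightarrow> (\<forall>x. \<phi> (f x) = g (\<phi> x))"

lemma inr_decompose:
  assumes "interchange_near_ring m"
  shows "m x y = m x 0 + m 0 y"
  using assms unfolding interchange_near_ring_def
  by (metis add.left_neutral add.right_neutral)

lemma group_hom_zero:
  assumes "group_hom f"
  shows "f 0 = 0"
proof -
  have "f 0 + f 0 = f 0 + 0"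
    using assms unfolding group_hom_def by (metis add_0_left add_0_right)
  then show ?thesis by (rule add_left_imp_eq)
qed

lemma group_aut_inv:
  assumes "group_aut f"
  shows "group_aut (inv f)"
proof -
  have bij: "bij f" and hom: "\<And>x y. f (x + y) = f x + f y"
    using assms unfolding group_aut_def group_hom_def by auto
  have "inv f (x + y) = inv f x + inv f y" for x y
  proof -
    have "f (inv f x + inv f y) = x + y"
      using bij hom by (simp add: bij_is_surj surj_f_inv_f)
    then show ?thesis using bij by (metis bij_inv_eq_iff)
  qed
  then show ?thesis
    using bij_imp_bij_inv[OF bij] unfolding group_aut_def group_hom_def by blast
qed

lemma inr_iso_iff_intertwines:
  assumes m1: "interchange_near_ring m1" and m2: "interchange_near_ring m2"
    and aut: "group_aut \<phi>"
  shows "inr_iso m1 m2 \<phi> \<longleftrightarrow>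
    intertwines \<phi> (\<lambda>x. m1 x 0) (\<lambda>x. m2 x 0) \<and> intertwines \<phi> (\<lambda>x. m1 0 x) (\<lambda>x. m2 0 x)"
proof
  have zero: "\<phi> 0 = 0" using aut group_hom_zero unfolding group_aut_def by blast
  assume "inr_iso m1 m2 \<phi>"
  then have "\<phi> (m1 x y) = m2 (\<phi> x) (\<phi> y)" for x y unfolding inr_iso_def by blast
  then show "intertwines \<phi> (\<lambda>x. m1 x 0) (\<lambda>x. m2 x 0) \<and> intertwines \<phi> (\<lambda>x. m1 0 x) (\<lambda>x. m2 0 x)"
    unfolding intertwines_def by (metis zero)
next
  assume "intertwines \<phi> (\<lambda>x. m1 x 0) (\<lambda>x. m2 x 0) \<and> intertwines \<phi> (\<lambda>x. m1 0 x) (\<lambda>x. m2 0 x)"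
  then have right: "\<phi> (m1 x 0) = m2 (\<phi> x) 0" and left: "\<phi> (m1 0 y) = m2 0 (\<phi> y)" for x y
    unfolding intertwines_def by auto
  have hom: "\<phi> (a + b) = \<phi> a + \<phi> b" for a b
    using aut unfolding group_aut_def group_hom_def by blast
  have "\<phi> (m1 x y) = m2 (\<phi> x) (\<phi> y)" for x y
  proof -
    have "\<phi> (m1 x y) = \<phi> (m1 x 0) + \<phi> (m1 0 y)"
      using inr_decompose[OF m1] hom by metis
    also have "\<dots> = m2 (\<phi> x) 0 + m2 0 (\<phi> y)" by (simp add: right left)
    also have "\<dots> = m2 (\<phi> x) (\<phi> y)" using inr_decompose[OF m2] by metis
    finally show ?thesis .
  qed
  then show "inr_iso m1 m2 \<phi>" using aut unfolding inr_iso_def group_aut_def by blast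
qed

lemma conjugate_eq_iff_intertwines:
  assumes "bij \<alpha>"
  shows "inv \<alpha> \<circ> f \<circ> \<alpha> = g \<longleftrightarrow> intertwines (inv \<alpha>) f g"
proof -
  have "inv \<alpha> \<circ> f \<circ> \<alpha> = g \<longleftrightarrow> (\<forall>u. inv \<alpha> (f (\<alpha> u)) = g u)"
    by (simp add: fun_eq_iff)
  also have "\<dots> \<longleftrightarrow> (\<forall>x. inv \<alpha> (f x) = g (inv \<alpha> x))"
    using assms by (metis bij_inv_eq_iff)
  finally show ?thesis unfolding intertwines_def .
qed

theorem theorem3p5:
  fixes mul1 mul2 :: "'a::group_add \<Rightarrow> 'a \<Rightarrow> 'a"
  assumes "interchange_near_ring mul1"
    and "interchange_near_ring mul2"
  shows "inr_isomorphic mul1 mul2 \<longleftrightarrow>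
    (\<exists>\<alpha>. group_aut \<alpha> \<and>
        inv \<alpha> \<circ> (\<lambda>x. mul1 x 0) \<circ> \<alpha> = (\<lambda>x. mul2 x 0) \<and>
        inv \<alpha> \<circ> (\<lambda>x. mul1 0 x) \<circ> \<alpha> = (\<lambda>x. mul2 0 x))"
    (is "_ \<longleftrightarrow> (\<exists>\<alpha>. ?similar \<alpha>)")
proof -
  let ?intertw = "\<lambda>\<phi>. group_aut \<phi> \<and> intertwines \<phi> (\<lambda>x. mul1 x 0) (\<lambda>x. mul2 x 0)
                      \<and> intertwines \<phi> (\<lambda>x. mul1 0 x) (\<lambda>x. mul2 0 x)"
  have iso: "inr_isomorphic mul1 mul2 \<longleftrightarrow> (\<exists>\<phi>. ?intertw \<phi>)"
    using inr_iso_iff_intertwines[OF assms]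
    unfolding inr_isomorphic_def inr_iso_def group_aut_def by blast
  have similar: "?similar \<alpha> \<longleftrightarrow> group_aut \<alpha> \<and> ?intertw (inv \<alpha>)" for \<alpha>
    using conjugate_eq_iff_intertwines group_aut_inv unfolding group_aut_def by blast
  have "(\<exists>\<phi>. ?intertw \<phi>) \<longleftrightarrow> (\<exists>\<alpha>. group_aut \<alpha> \<and> ?intertw (inv \<alpha>))"
  proof
    assume "\<exists>\<phi>. ?intertw \<phi>"
    then obtain \<phi> where "?intertw \<phi>" by blast
    moreover have "inv (inv \<phi>) = \<phi>"
      using \<open>?intertw \<phi>\<close> by (simp add: group_aut_def inv_inv_eq)
    ultimately show "\<exists>\<alpha>. group_aut \<alpha> \<and> ?intertw (inv \<alpha>)"
      using group_aut_inv by metis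
  qed blast
  then show ?thesis using iso similar by blast
qed

end
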